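(* There is an absolute constant $c$ such that the following holds. Let $T$ be an orientation-preserving Möbius automorphism of the upper half plane $\mathbb H$, and let $z\in\mathbb C$ with $i+z\in\mathbb H$ and $T(i+z)=i$. Let $v,w\in\partial\mathbb U$. If $|z|\le1/3$ then $$\operatorname{ash}(T,v,w)=\Re\Big[(\bar w-\bar v)\Big(-z-\tfrac{i(2+\bar v+\bar w)}{4}z^2\Big)\Big]+\varepsilon_3=-\Re\big[(\bar w-\bar v)z\big]+\varepsilon_2=\varepsilon_1,$$ where $|\varepsilon_d|\le c|w-v||z|^d\le 2c|z|^d$ for $d=1,2,3$. If $v=-1$, the same bounds hold without the assumption $|z|\le1/3$.
   Context: $\mathbb U$ is the open unit disk; $U(r)=\frac{i-r}{i+r}$ maps $\overline{\mathbb H}$ bijectively onto $\overline{\mathbb U}$ (with $U(\infty)=-1$), sending $i$ to $0$. A Möbius automorphism $T$ of $\mathbb H$ acts on $\overline{\mathbb U}$ by $\hat T=U\circ T\circ U^{-1}$. For $v,w\in\partial\mathbb U$, $\operatorname{ash}(T,v,w)=\operatorname{Arg}_{[0,2\pi)}(\hat T(w)/\hat T(v))-\operatorname{Arg}_{[0,2\pi)}(w/v)$, with $\operatorname{Arg}_{[0,2\pi)}$ the argument in $[0,2\pi)$. *)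

theory Defs
  imports "HOL-Analysis.Analysis"
begin

text \<open>2x2 complex matrices (p,q,r,s) = [[p,q],[r,s]] acting as Moebius maps.\<close>
type_synonym cmat = "complex \<times> complex \<times> complex \<times> complex"

definition mob_apply :: "cmat \<Rightarrow> complex \<Rightarrow> complex" where
  "mob_apply M x = (case M of (p,q,r,t) \<Rightarrow> (p * x + q) / (r * x + t))"

definition cmat_mult :: "cmat \<Rightarrow> cmat \<Rightarrow> cmat" where
  "cmat_mult M N = (case M of (p,q,r,t) \<Rightarrow> case N of (p2,q2,r2,t2) \<Rightarrow>
     (p * p2 + q * r2, p * q2 + q * t2, r * p2 + t * r2, r * q2 + t * t2))"

text \<open>The Moebius map T(x) = (a x + b)/(c x + d) with real a,b,c,d; it is an
  orientation-preserving automorphism of the upper half plane iff a d - b c > 0.\<close>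
definition T_mat :: "real \<Rightarrow> real \<Rightarrow> real \<Rightarrow> real \<Rightarrow> cmat" where
  "T_mat a b c d = (complex_of_real a, complex_of_real b, complex_of_real c, complex_of_real d)"

definition mobT :: "real \<Rightarrow> real \<Rightarrow> real \<Rightarrow> real \<Rightarrow> complex \<Rightarrow> complex" where
  "mobT a b c d = mob_apply (T_mat a b c d)"

text \<open>U(r) = (i - r)/(i + r) and its inverse U^{-1}(w) = i(1-w)/(1+w).\<close>
definition U_mat :: cmat where "U_mat = (-1, \<i>, 1, \<i>)"
definition Uinv_mat :: cmat where "Uinv_mat = (-\<i>, \<i>, 1, 1)"

definition Ucayley :: "complex \<Rightarrow> complex" where "Ucayley = mob_apply U_mat"

text \<open>hat T = U o T o U^{-1}, as the Moebius map of the product matrix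
  (this is the extension to the Riemann sphere, correct also at w = -1 = U(\<infinity>)).\<close>
definition hatT :: "real \<Rightarrow> real \<Rightarrow> real \<Rightarrow> real \<Rightarrow> complex \<Rightarrow> complex" where
  "hatT a b c d = mob_apply (cmat_mult U_mat (cmat_mult (T_mat a b c d) Uinv_mat))"

definition Arg02 :: "complex \<Rightarrow> real" where
  "Arg02 x = (if Arg x < 0 then Arg x + 2 * pi else Arg x)"

definition ash :: "real \<Rightarrow> real \<Rightarrow> real \<Rightarrow> real \<Rightarrow> complex \<Rightarrow> complex \<Rightarrow> real" where
  "ash a b c d v w = Arg02 (hatT a b c d w / hatT a b c d v) - Arg02 (w / v)"

end

theory Submission
  imports Defs
begin

text \<open>
  Put \<open>\<alpha> = -z/(2\<i> + z)\<close>, the Cayley image \<open>U(\<i> + z)\<close> of the preimage of \<open>\<i>\<close>.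
  The normalisation \<open>T(\<i> + z) = \<i>\<close> forces \<open>hatT\<close> to be a nonzero multiple of the disk
  automorphism \<open>b\<^sub>\<alpha>(u) = (u - \<alpha>)/(1 - cnj \<alpha> u)\<close>, so \<open>ash\<close> only depends on \<open>\<alpha>\<close>.
  On the unit circle \<open>b\<^sub>\<alpha>(u) = u q\<^sub>u / cnj q\<^sub>u\<close> with \<open>q\<^sub>u = 1 - \<alpha> cnj u\<close>, hence
  \<open>b\<^sub>\<alpha>(w)/b\<^sub>\<alpha>(v) = (w/v) e\<^sup>i\<^sup>\<delta>\<close> for the rotation angle \<open>\<delta> = 2 (arg q\<^sub>w - arg q\<^sub>v)\<close>.

  For \<open>|z| \<le> 1/3\<close> we have \<open>|\<alpha>| \<le> 3|z|/5\<close>; a Lipschitz bound for \<open>Ln\<close> shows that \<open>\<delta>\<close> is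
  too small to make \<open>Arg02\<close> wrap around, so \<open>ash = \<delta>\<close>, and the expansion
  \<open>Ln(1 - h) = -h - h\<^sup>2/2 + O(|h|\<^sup>3)\<close> gives the cubic estimate for \<open>\<delta>\<close>.
  For \<open>v = -1\<close> we pull back to the half plane: \<open>w = U(s)\<close> with \<open>s\<close> real, and
  \<open>ash = 2 (Arg (\<i>(s - \<i> - z)) - Arg (\<i>(s - \<i>)))\<close>, a difference of arguments of two points of the
  right half plane at distance \<open>|z|\<close>, bounded by a Lipschitz estimate for \<open>Ln\<close> on a segment.
  Finally the three error bounds of the theorem (with \<open>c = 100\<close>) follow by elementary
  arithmetic from the cubic estimate (case \<open>|z| \<le> 1/3\<close>) or the linear one (case \<open>v = -1\<close>).
\<close>

section \<open>Arguments of points on the unit circle\<close>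

lemma norm_exp_i_minus_one_le: "cmod (exp (\<i> * of_real t) - 1) \<le> \<bar>t\<bar>"
  using abs_sin_x_le_abs_x[of "t/2"] by (simp add: dist_exp_i_1)

lemma exp_i_add_2pi: "exp (\<i> * of_real (t + 2*pi)) = exp (\<i> * of_real t)"
proof -
  have "exp (\<i> * of_real (t + 2*pi)) = exp (\<i> * of_real t + \<i> * (of_real pi * 2))"
    by (simp add: algebra_simps)
  also have "\<dots> = exp (\<i> * of_real t)" by (simp add: exp_add)
  finally show ?thesis .
qed

lemma Arg02_range: "0 \<le> Arg02 x \<and> Arg02 x < 2*pi"
  using Arg_bounded[of x] by (auto simp: Arg02_def)

lemma Arg02_exp:
  assumes "0 \<le> t" "t < 2*pi"
  shows "Arg02 (exp (\<i> * of_real t)) = t"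
proof (cases "t \<le> pi")
  case True
  then have "Arg (exp (\<i> * of_real t)) = t"
    using assms by (subst Arg_exp) auto
  then show ?thesis using assms by (simp add: Arg02_def)
next
  case False
  then have "Arg (exp (\<i> * of_real (t - 2*pi))) = t - 2*pi"
    using assms by (subst Arg_exp) auto
  then show ?thesis
    using False assms exp_i_add_2pi[of "t - 2*pi"] by (simp add: Arg02_def)
qed

lemma unit_eq_exp_Arg02:
  assumes "cmod r = 1"
  shows "r = exp (\<i> * of_real (Arg02 r))"
proof -
  have r0: "r \<noteq> 0" using assms by auto
  have "r = exp (Ln r)" using r0 by simp
  also have "Ln r = \<i> * of_real (Arg r)"
    using r0 assms by (simp add: complex_eq_iff Arg_eq_Im_Ln)
  finally have r: "r = exp (\<i> * of_real (Arg r))" .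
  then show ?thesis
    using exp_i_add_2pi[of "Arg r"] by (simp add: Arg02_def)
qed

lemma Arg02_rotate:
  assumes "cmod r = 1" "\<bar>\<delta>\<bar> \<le> cmod (r - 1) / 2"
  shows "Arg02 (r * exp (\<i> * of_real \<delta>)) = Arg02 r + \<delta>"
proof -
  define t where "t = Arg02 r"
  have t: "0 \<le> t" "t < 2*pi" using Arg02_range t_def by auto
  have r: "r = exp (\<i> * of_real t)" using unit_eq_exp_Arg02 assms t_def by blast
  have below: "cmod (r - 1) \<le> t" using norm_exp_i_minus_one_le[of t] r t by simp
  have "r = exp (\<i> * of_real (t - 2*pi))" using r exp_i_add_2pi[of "t - 2*pi"] by simp
  then have above: "cmod (r - 1) \<le> 2*pi - t"
    using norm_exp_i_minus_one_le[of "t - 2*pi"] t by simp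
  have "r * exp (\<i> * of_real \<delta>) = exp (\<i> * of_real (t + \<delta>))"
    using r by (simp add: exp_add[symmetric] algebra_simps)
  moreover have "0 \<le> t + \<delta>" "t + \<delta> < 2*pi"
    using assms(2) below above t by (auto simp: abs_le_iff)
  ultimately show ?thesis using Arg02_exp t_def by metis
qed

lemma Arg02_reflection:
  assumes "Re g > 0"
  shows "Arg02 (- g / cnj g) = pi + 2 * Arg g"
proof -
  have g0: "g \<noteq> 0" using assms by auto
  have small: "\<bar>Arg g\<bar> < pi/2" using Arg_Re_pos assms by blast
  have "g = exp (Ln g)" using g0 by simp
  also have "Ln g = of_real (ln (cmod g)) + \<i> * of_real (Arg g)"
    using g0 by (simp add: complex_eq_iff Arg_eq_Im_Ln)
  finally have g: "g = of_real (cmod g) * exp (\<i> * of_real (Arg g))"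
    using g0 by (simp add: exp_add exp_of_real)
  have "cnj g = of_real (cmod g) * exp (- (\<i> * of_real (Arg g)))"
    by (subst g) (simp add: exp_cnj)
  then have "- g / cnj g = - (exp (\<i> * of_real (Arg g)) / exp (- (\<i> * of_real (Arg g))))"
    using g0 by (subst g) (simp add: divide_simps)
  also have "\<dots> = exp (\<i> * of_real (pi + 2 * Arg g))"
    by (simp add: exp_diff[symmetric] exp_add algebra_simps)
  finally have "- g / cnj g = exp (\<i> * of_real (pi + 2 * Arg g))" .
  moreover have "0 \<le> pi + 2 * Arg g" "pi + 2 * Arg g < 2*pi" using small by auto
  ultimately show ?thesis using Arg02_exp by metis
qed

section \<open>Lipschitz estimates for the logarithm\<close>

lemma Re_pos_not_nonpos_Reals: "Re z > 0 \<Longrightarrow> z \<notin> \<real>\<^sub>\<le>\<^sub>0"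
  by (auto simp: complex_nonpos_Reals_iff)

lemma Ln_lipschitz:
  assumes "r < 1" "cmod (a - 1) \<le> r" "cmod (b - 1) \<le> r"
  shows "cmod (Ln a - Ln b) \<le> cmod (a - b) / (1 - r)"
proof -
  have "cmod (Ln a - Ln b) \<le> (1/(1-r)) * cmod (a - b)"
  proof (rule field_differentiable_bound [OF convex_cball, where f' = inverse])
    fix x :: complex assume x: "x \<in> cball 1 r"
    then have d: "cmod (x - 1) \<le> r" by (simp add: dist_norm norm_minus_commute)
    have "\<bar>Re (x - 1)\<bar> \<le> cmod (x - 1)" by (rule abs_Re_le_cmod)
    then have "Re x > 0" using d assms(1) by simp
    then show "(Ln has_field_derivative inverse x) (at x within cball 1 r)"
      by (rule has_field_derivative_at_within[OF has_field_derivative_Ln[OF Re_pos_not_nonpos_Reals]])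
    have "1 - r \<le> cmod x" using norm_triangle_ineq2[of 1 x] d by (simp add: norm_minus_commute)
    moreover have "0 < 1 - r" using assms(1) by simp
    ultimately have "inverse (cmod x) \<le> inverse (1 - r)" by (intro le_imp_inverse_le) auto
    then show "cmod (inverse x) \<le> 1 / (1 - r)" by (metis norm_inverse inverse_eq_divide)
  next
    show "a \<in> cball 1 r" "b \<in> cball 1 r" using assms by (auto simp: dist_norm norm_minus_commute)
  qed
  then show ?thesis by simp
qed

definition ln_remainder :: "complex \<Rightarrow> complex" where
  "ln_remainder h = Ln (1 - h) + h + h^2/2"

text \<open>Its derivative is \<open>-h\<^sup>2/(1 - h)\<close>, so on the disk \<open>|h| \<le> r < 1\<close> it is Lipschitz with
  constant \<open>r\<^sup>2/(1 - r)\<close>.\<close>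
lemma ln_remainder_lipschitz:
  assumes "r < 1" "cmod h1 \<le> r" "cmod h2 \<le> r"
  shows "cmod (ln_remainder h1 - ln_remainder h2) \<le> r^2/(1-r) * cmod (h1 - h2)"
proof (rule field_differentiable_bound [OF convex_cball, where f' = "\<lambda>h. - (h^2 / (1 - h))"])
  fix x :: complex assume "x \<in> cball 0 r"
  then have d: "cmod x \<le> r" by simp
  have "\<bar>Re x\<bar> \<le> cmod x" by (rule abs_Re_le_cmod)
  then have re: "Re (1 - x) > 0" using d assms(1) by auto
  then have x1: "1 - x \<noteq> 0" by auto
  have "((\<lambda>h. Ln (1-h)) has_field_derivative (inverse (1-x) * (-1))) (at x)"
    by (rule DERIV_chain2[where g="\<lambda>h. 1 - h",
          OF has_field_derivative_Ln[OF Re_pos_not_nonpos_Reals[OF re]]])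
       (auto intro!: derivative_eq_intros)
  then have "(ln_remainder has_field_derivative (inverse (1-x) * (-1) + 1 + (2 * x)/2)) (at x)"
    using Re_pos_not_nonpos_Reals[OF re] unfolding ln_remainder_def[abs_def]
    by (auto intro!: derivative_eq_intros)
  moreover have "inverse (1-x) * (-1) + 1 + (2 * x)/2 = - (x^2 / (1 - x))"
    using x1 by (simp add: divide_simps) (simp add: algebra_simps power2_eq_square)
  ultimately show "(ln_remainder has_field_derivative - (x^2 / (1 - x))) (at x within cball 0 r)"
    by (metis has_field_derivative_at_within)
  have "1 - r \<le> cmod (1 - x)" using norm_triangle_ineq2[of 1 x] d by simp
  moreover have "cmod (x^2) \<le> r^2" using d by (simp add: norm_power power_mono)
  ultimately show "cmod (- (x^2 / (1 - x))) \<le> r^2 / (1 - r)" using assms(1)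
    unfolding norm_minus_cancel norm_divide by (intro frac_le) auto
next
  show "h1 \<in> cball 0 r" "h2 \<in> cball 0 r" using assms by auto
qed

text \<open>For \<open>\<rho> \<le> |g|/2\<close> this is the Lipschitz bound \<open>2/|g|\<close> for \<open>Ln\<close> on the segment
  between them; otherwise it is implied by the trivial bound \<open>\<pi>\<close>.\<close>
lemma Arg_diff_right_half_plane:
  assumes gp: "Re g' > 0" and gi: "Re g > 0" and dist: "cmod (g' - g) = \<rho>"
  shows "\<bar>Arg g' - Arg g\<bar> \<le> 2 * pi * \<rho> / cmod g"
proof -
  have g0: "g \<noteq> 0" and g'0: "g' \<noteq> 0" using gp gi by auto
  have ng: "cmod g > 0" using g0 by simp
  have \<rho>0: "0 \<le> \<rho>" using dist by (metis norm_ge_zero)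
  show ?thesis
  proof (cases "2 * \<rho> \<le> cmod g")
    case True
    have "cmod (Ln g' - Ln g) \<le> (2 / cmod g) * cmod (g' - g)"
    proof (rule field_differentiable_bound [OF convex_closed_segment, where f' = inverse])
      fix x assume "x \<in> closed_segment g g'"
      then obtain u where u: "0 \<le> u" "u \<le> 1" and x: "x = (1 - u) *\<^sub>R g + u *\<^sub>R g'"
        by (auto simp: in_segment)
      have "Re x = (1 - u) * Re g + u * Re g'" using x by simp
      also have "\<dots> > 0"
        using u gi gp by (cases "u = 0") (auto intro: add_nonneg_pos)
      finally have "Re x > 0" .
      then show "(Ln has_field_derivative inverse x) (at x within closed_segment g g')"
        by (rule has_field_derivative_at_within[OF has_field_derivative_Ln[OF Re_pos_not_nonpos_Reals]])
      have "x - g = u *\<^sub>R (g' - g)" using x by (simp add: algebra_simps)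
      then have "cmod (x - g) = u * \<rho>" using u dist by simp
      also have "\<dots> \<le> \<rho>" using u \<rho>0 by (intro mult_left_le_one_le) auto
      finally have "cmod g - \<rho> \<le> cmod x"
        using norm_triangle_ineq2[of g x] by (simp add: norm_minus_commute)
      then have "cmod g / 2 \<le> cmod x" using True by simp
      then have "inverse (cmod x) \<le> inverse (cmod g / 2)" using ng by (intro le_imp_inverse_le) auto
      then show "cmod (inverse x) \<le> 2 / cmod g" by (simp add: norm_inverse)
    qed auto
    then have Ln_bound: "cmod (Ln g' - Ln g) \<le> 2 * \<rho> / cmod g" using dist by simp
    have "\<bar>Arg g' - Arg g\<bar> = \<bar>Im (Ln g' - Ln g)\<bar>" using g0 g'0 by (simp add: Arg_eq_Im_Ln)
    also have "\<dots> \<le> cmod (Ln g' - Ln g)" by (rule abs_Im_le_cmod)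
    also have "\<dots> \<le> 2 * \<rho> / cmod g" by (rule Ln_bound)
    also have "\<dots> \<le> 2 * pi * \<rho> / cmod g"
      using \<rho>0 ng pi_gt3 by (intro divide_right_mono mult_right_mono) auto
    finally show ?thesis .
  next
    case False
    have "\<bar>Arg g'\<bar> < pi/2" "\<bar>Arg g\<bar> < pi/2" using Arg_Re_pos gp gi by blast+
    then have "\<bar>Arg g' - Arg g\<bar> \<le> pi" by linarith
    also have "pi \<le> 2 * pi * \<rho> / cmod g"
      using False ng by (simp add: divide_simps)
    finally show ?thesis .
  qed
qed


section \<open>\<open>hatT\<close> as a rotated disk automorphism\<close>

definition blaschke :: "complex \<Rightarrow> complex \<Rightarrow> complex" where
  "blaschke \<alpha> u = (u - \<alpha>) / (1 - cnj \<alpha> * u)"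

definition hat_P :: "real \<Rightarrow> real \<Rightarrow> real \<Rightarrow> real \<Rightarrow> complex" where
  "hat_P a b c d = Complex (c - b) (a + d)"

definition hat_Q :: "real \<Rightarrow> real \<Rightarrow> real \<Rightarrow> real \<Rightarrow> complex" where
  "hat_Q a b c d = Complex (- (b + c)) (d - a)"

lemma hatT_eq:
  "hatT a b c d u = (hat_P a b c d * u + hat_Q a b c d) / (- cnj (hat_Q a b c d) * u - cnj (hat_P a b c d))"
  unfolding hatT_def cmat_mult_def U_mat_def Uinv_mat_def T_mat_def mob_apply_def hat_P_def hat_Q_def
  by simp (intro arg_cong2[where f="(/)"]; simp add: complex_eq_iff algebra_simps)

text \<open>\<open>|P|\<^sup>2 - |Q|\<^sup>2 = 4 (a d - b c)\<close>: orientation preservation makes \<open>hatT\<close> a disk automorphism.\<close>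
lemma hat_Q_less_hat_P:
  assumes "a*d - b*c > 0"
  shows "cmod (hat_Q a b c d) < cmod (hat_P a b c d)"
proof -
  have "cmod (hat_Q a b c d)^2 < cmod (hat_P a b c d)^2"
    unfolding cmod_power2 hat_P_def hat_Q_def using assms by (simp add: power2_eq_square algebra_simps)
  then show ?thesis using power2_less_imp_less by fastforce
qed

lemma hat_coeffs_fixed_point:
  assumes "mobT a b c d p = \<i>"
  shows "hat_Q a b c d * (\<i> + p) = hat_P a b c d * (p - \<i>)"
proof -
  have den: "of_real c * p + of_real d \<noteq> 0"
  proof
    assume "of_real c * p + of_real d = 0"
    then have "mobT a b c d p = 0" by (simp add: mobT_def mob_apply_def T_mat_def)
    then show False using assms by simp
  qed
  have "of_real a * p + of_real b = \<i> * (of_real c * p + of_real d)"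
    using assms den by (simp add: mobT_def mob_apply_def T_mat_def divide_eq_eq)
  then have "a * Re p + b = - (c * Im p)" and "a * Im p = c * Re p + d"
    by (simp_all add: complex_eq_iff)
  then show ?thesis by (simp add: complex_eq_iff algebra_simps hat_P_def hat_Q_def)
qed

lemma hatT_blaschke:
  assumes det: "a*d - b*c > 0" and im: "Im (\<i> + z) > 0" and T: "mobT a b c d (\<i> + z) = \<i>"
  defines "\<alpha> \<equiv> - z / (2*\<i> + z)"
  shows "cmod \<alpha> < 1"
    and "\<exists>k. k \<noteq> 0 \<and> (\<forall>u. hatT a b c d u = k * blaschke \<alpha> u)"
proof -
  define P where "P = hat_P a b c d"
  define Q where "Q = hat_Q a b c d"
  have PQ: "cmod Q < cmod P" using hat_Q_less_hat_P det P_def Q_def by blast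
  then have P0: "P \<noteq> 0" by auto
  have "2*\<i> + z \<noteq> 0" using im by (auto simp: complex_eq_iff)
  moreover have "Q * (2*\<i> + z) = P * z"
    using hat_coeffs_fixed_point[OF T] P_def Q_def by (simp add: algebra_simps)
  ultimately have Q: "Q = - \<alpha> * P" unfolding \<alpha>_def by (simp add: field_simps)
  then have "cmod Q = cmod \<alpha> * cmod P" by (simp add: norm_mult)
  then show "cmod \<alpha> < 1" using PQ P0 by simp
  have "hatT a b c d u = (- P / cnj P) * blaschke \<alpha> u" for u
  proof (cases "1 - cnj \<alpha> * u = 0")
    case True
    then have "- cnj Q * u - cnj P = 0" unfolding Q by (simp add: algebra_simps)
    then show ?thesis using True by (simp add: hatT_eq blaschke_def P_def Q_def)
  next
    case False
    have "hatT a b c d u = (P * u + Q) / (- cnj Q * u - cnj P)" by (simp add: hatT_eq P_def Q_def)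
    also have "\<dots> = (- P / cnj P) * blaschke \<alpha> u"
      unfolding Q blaschke_def using False P0 by (simp add: field_simps)
    finally show ?thesis .
  qed
  then show "\<exists>k. k \<noteq> 0 \<and> (\<forall>u. hatT a b c d u = k * blaschke \<alpha> u)"
    using P0 by (intro exI[of _ "- P / cnj P"]) auto
qed

lemma ash_blaschke:
  assumes "a*d - b*c > 0" "Im (\<i> + z) > 0" "mobT a b c d (\<i> + z) = \<i>"
  shows "ash a b c d v w =
    Arg02 (blaschke (- z / (2*\<i> + z)) w / blaschke (- z / (2*\<i> + z)) v) - Arg02 (w / v)"
proof -
  obtain k where "k \<noteq> 0" "\<And>u. hatT a b c d u = k * blaschke (- z / (2*\<i> + z)) u"
    using hatT_blaschke(2)[OF assms] by blast
  then show ?thesis unfolding ash_def by simp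
qed

section \<open>The rotation angle of a Blaschke factor\<close>

lemma unit_mult_cnj: "cmod u = 1 \<Longrightarrow> u * cnj u = 1"
  using complex_norm_square[of u] by simp

lemma one_minus_mult_cnj_nonzero: "cmod \<alpha> < 1 \<Longrightarrow> cmod u = 1 \<Longrightarrow> 1 - \<alpha> * cnj u \<noteq> 0"
  by (metis norm_mult complex_mod_cnj mult_1_right norm_one right_minus_eq order.irrefl)

lemma div_cnj_eq_exp: "q \<noteq> 0 \<Longrightarrow> q / cnj q = exp (\<i> * of_real (2 * Im (Ln q)))"
proof -
  assume q: "q \<noteq> 0"
  have "q / cnj q = exp (Ln q) / exp (cnj (Ln q))" using q by (simp add: exp_cnj[symmetric])
  also have "\<dots> = exp (Ln q - cnj (Ln q))" by (simp add: exp_diff)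
  also have "Ln q - cnj (Ln q) = \<i> * of_real (2 * Im (Ln q))" by (simp add: complex_eq_iff)
  finally show ?thesis .
qed

definition rot_angle :: "complex \<Rightarrow> complex \<Rightarrow> complex \<Rightarrow> real" where
  "rot_angle \<alpha> v w = 2 * (Im (Ln (1 - \<alpha> * cnj w)) - Im (Ln (1 - \<alpha> * cnj v)))"

lemma blaschke_unit_circle:
  assumes "cmod u = 1"
  shows "blaschke \<alpha> u = u * ((1 - \<alpha> * cnj u) / cnj (1 - \<alpha> * cnj u))"
proof -
  have "u - \<alpha> = u * (1 - \<alpha> * cnj u)"
    using unit_mult_cnj[OF assms] by (simp add: algebra_simps)
  then show ?thesis by (simp add: blaschke_def mult.commute)
qed

lemma blaschke_ratio_rotation:
  assumes \<alpha>: "cmod \<alpha> < 1" and v: "cmod v = 1" and w: "cmod w = 1"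
  shows "blaschke \<alpha> w / blaschke \<alpha> v = (w / v) * exp (\<i> * of_real (rot_angle \<alpha> v w))"
proof -
  define qw where "qw = 1 - \<alpha> * cnj w"
  define qv where "qv = 1 - \<alpha> * cnj v"
  have qw: "qw \<noteq> 0" and qv: "qv \<noteq> 0"
    using one_minus_mult_cnj_nonzero \<alpha> v w qw_def qv_def by auto
  have "blaschke \<alpha> w / blaschke \<alpha> v = (w / v) * ((qw / cnj qw) / (qv / cnj qv))"
    unfolding blaschke_unit_circle[OF w] blaschke_unit_circle[OF v] qw_def[symmetric] qv_def[symmetric]
    by (simp add: mult_ac)
  also have "\<dots> = (w / v) * (exp (\<i> * of_real (2 * Im (Ln qw))) / exp (\<i> * of_real (2 * Im (Ln qv))))"
    using div_cnj_eq_exp qw qv by simp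
  also have "\<dots> = (w / v) * exp (\<i> * of_real (rot_angle \<alpha> v w))"
    unfolding rot_angle_def qw_def qv_def by (simp add: exp_diff[symmetric] algebra_simps)
  finally show ?thesis .
qed


section \<open>The cubic estimate for small \<open>z\<close>\<close>

lemma alpha_small:
  assumes "cmod z \<le> 1/3"
  shows "5/3 \<le> cmod (2*\<i> + z)" and "cmod (- z / (2*\<i> + z)) \<le> 3/5 * cmod z"
proof -
  have "cmod (2*\<i>) \<le> cmod (2*\<i> + z) + cmod (-z)"
    using norm_triangle_ineq[of "2*\<i> + z" "-z"] by simp
  then show den: "5/3 \<le> cmod (2*\<i> + z)" using assms by (simp add: norm_mult)
  have "cmod (- z / (2*\<i> + z)) = cmod z / cmod (2*\<i> + z)" by (simp add: norm_divide)
  also have "\<dots> \<le> cmod z / (5/3)" using den by (intro divide_left_mono) auto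
  finally show "cmod (- z / (2*\<i> + z)) \<le> 3/5 * cmod z" by simp
qed

text \<open>Second-order expansions \<open>\<alpha> = \<i>z/2 - z\<^sup>2/4 + O(|z|\<^sup>3)\<close> and \<open>\<alpha>\<^sup>2 = -z\<^sup>2/4 + O(|z|\<^sup>3)\<close>;
  exactly, the remainders are \<open>z\<^sup>3/(4(2\<i> + z))\<close> and \<open>z\<^sup>3(4\<i> + z)/(4(2\<i> + z)\<^sup>2)\<close>.\<close>
lemma alpha_expansion:
  assumes z: "cmod z \<le> 1/3"
  defines "\<alpha> \<equiv> - z / (2*\<i> + z)"
  shows "cmod (\<alpha> - \<i>*z/2 + z^2/4) \<le> 3/20 * cmod z ^ 3"
    and "cmod (\<alpha>^2 + z^2/4) \<le> 39/100 * cmod z ^ 3"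
proof -
  have den: "5/3 \<le> cmod (2*\<i> + z)" using alpha_small(1)[OF z] .
  then have nz: "2*\<i> + z \<noteq> 0" by auto
  have \<alpha>: "\<alpha> * (2*\<i> + z) = -z" using nz by (simp add: \<alpha>_def)
  have "(\<alpha> - \<i>*z/2 + z^2/4) * (4 * (2*\<i> + z)) = 4 * (\<alpha> * (2*\<i> + z)) - 2*\<i>*z*(2*\<i> + z) + z^2*(2*\<i> + z)"
    by (simp add: algebra_simps)
  also have "\<dots> = z^3" unfolding \<alpha> by (simp add: algebra_simps power2_eq_square power3_eq_cube)
  moreover have "4 * (2*\<i> + z) \<noteq> 0" using nz by (simp only: mult_eq_0_iff) simp
  ultimately have "\<alpha> - \<i>*z/2 + z^2/4 = z^3 / (4 * (2*\<i> + z))"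
    by (simp add: eq_divide_eq)
  then have "cmod (\<alpha> - \<i>*z/2 + z^2/4) = cmod z ^ 3 / (4 * cmod (2*\<i> + z))"
    by (simp only: norm_divide norm_mult norm_power) simp
  also have "\<dots> \<le> cmod z ^ 3 / (4 * (5/3))" using den by (intro divide_left_mono) auto
  finally show "cmod (\<alpha> - \<i>*z/2 + z^2/4) \<le> 3/20 * cmod z ^ 3" by simp
  have "(\<alpha>^2 + z^2/4) * (4 * (2*\<i> + z)^2) = 4 * (\<alpha> * (2*\<i> + z))^2 + z^2 * (2*\<i> + z)^2"
    by (simp add: algebra_simps power2_eq_square)
  also have "\<dots> = z^3 * (4*\<i> + z)" unfolding \<alpha> by (simp add: algebra_simps power2_eq_square power3_eq_cube)
  moreover have "4 * (2*\<i> + z)^2 \<noteq> 0" using nz by (simp only: mult_eq_0_iff power_eq_0_iff) simp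
  ultimately have "\<alpha>^2 + z^2/4 = z^3 * (4*\<i> + z) / (4 * (2*\<i> + z)^2)"
    by (simp add: eq_divide_eq)
  then have "cmod (\<alpha>^2 + z^2/4) = cmod z ^ 3 * cmod (4*\<i> + z) / (4 * cmod (2*\<i> + z)^2)"
    by (simp only: norm_divide norm_mult norm_power) simp
  also have "\<dots> \<le> cmod z ^ 3 * (13/3) / (4 * (5/3)^2)"
  proof -
    have "cmod (4*\<i> + z) \<le> cmod (4*\<i>) + cmod z" by (rule norm_triangle_ineq)
    then have "cmod (4*\<i> + z) \<le> 13/3" using z by (simp add: norm_mult)
    moreover have "(5/3)^2 \<le> cmod (2*\<i> + z)^2" using den by (intro power_mono) auto
    ultimately show ?thesis by (intro frac_le mult_left_mono mult_right_mono) auto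
  qed
  finally show "cmod (\<alpha>^2 + z^2/4) \<le> 39/100 * cmod z ^ 3" by (simp add: power2_eq_square)
qed

text \<open>For \<open>|\<alpha>| \<le> 1/5\<close> the rotation angle is at most half the distance \<open>|w - v|\<close>; this is what
  keeps \<open>Arg02\<close> from wrapping around in the small-\<open>z\<close> case.\<close>
lemma rot_angle_bound:
  assumes \<alpha>: "cmod \<alpha> \<le> 1/5" and v: "cmod v = 1" and w: "cmod w = 1"
  shows "\<bar>rot_angle \<alpha> v w\<bar> \<le> cmod (w - v) / 2"
proof -
  have "(1 - \<alpha> * cnj w) - (1 - \<alpha> * cnj v) = - (\<alpha> * cnj (w - v))"
    by (simp add: algebra_simps)
  then have "cmod ((1 - \<alpha> * cnj w) - (1 - \<alpha> * cnj v)) = cmod \<alpha> * cmod (w - v)"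
    by (simp only: norm_minus_cancel norm_mult complex_mod_cnj)
  moreover have "cmod (Ln (1 - \<alpha> * cnj w) - Ln (1 - \<alpha> * cnj v))
      \<le> cmod ((1 - \<alpha> * cnj w) - (1 - \<alpha> * cnj v)) / (1 - cmod \<alpha>)"
    using \<alpha> v w by (intro Ln_lipschitz) (auto simp: norm_mult)
  ultimately have Ln_bound: "cmod (Ln (1 - \<alpha> * cnj w) - Ln (1 - \<alpha> * cnj v))
      \<le> cmod \<alpha> * cmod (w - v) / (1 - cmod \<alpha>)" by simp
  have "\<bar>rot_angle \<alpha> v w\<bar> = \<bar>Im (2 * (Ln (1 - \<alpha> * cnj w) - Ln (1 - \<alpha> * cnj v)))\<bar>"
    by (simp add: rot_angle_def)
  also have "\<dots> \<le> cmod (2 * (Ln (1 - \<alpha> * cnj w) - Ln (1 - \<alpha> * cnj v)))"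
    by (rule abs_Im_le_cmod)
  also have "\<dots> = 2 * cmod (Ln (1 - \<alpha> * cnj w) - Ln (1 - \<alpha> * cnj v))"
    by (simp only: norm_mult) simp
  also have "\<dots> \<le> 2 * (cmod \<alpha> * cmod (w - v) / (1 - cmod \<alpha>))" using Ln_bound by simp
  also have "\<dots> \<le> cmod (w - v) / 2"
    using \<alpha> mult_right_mono[of "5 * cmod \<alpha>" 1 "cmod (w - v)"] by (simp add: field_simps)
  finally show ?thesis .
qed

text \<open>The exact decomposition of the rotation angle into the second-order Taylor part of
  \<open>Ln(1 - \<alpha> cnj u)\<close>, rewritten via the expansions of \<open>\<alpha>\<close> and \<open>\<alpha>\<^sup>2\<close> in \<open>z\<close>, and remainders.\<close>
lemma rot_angle_decomposition:
  "rot_angle \<alpha> v w =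
     Re ((cnj w - cnj v) * (- z - \<i> * (2 + cnj v + cnj w) / 4 * z^2))
     + Re (-2*\<i> * (ln_remainder (\<alpha> * cnj w) - ln_remainder (\<alpha> * cnj v)))
     + Re (-2*\<i> * ((\<alpha> - \<i>*z/2 + z^2/4) * (cnj v - cnj w)
                   + (\<alpha>^2 + z^2/4) * (cnj v ^ 2 - cnj w ^ 2) / 2))"
proof -
  define hw where "hw = \<alpha> * cnj w"
  define hv where "hv = \<alpha> * cnj v"
  have Ln_split: "Ln (1 - hw) - Ln (1 - hv)
      = (ln_remainder hw - ln_remainder hv) + (- (hw - hv) - (hw^2 - hv^2)/2)"
    by (simp add: ln_remainder_def field_simps)
  have taylor_part: "-2*\<i> * (- (hw - hv) - (hw^2 - hv^2)/2) =
      (cnj w - cnj v) * (- z - \<i> * (2 + cnj v + cnj w) / 4 * z^2)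
      + -2*\<i> * ((\<alpha> - \<i>*z/2 + z^2/4) * (cnj v - cnj w)
                + (\<alpha>^2 + z^2/4) * (cnj v ^ 2 - cnj w ^ 2) / 2)"
    unfolding hw_def hv_def by (simp add: field_simps power2_eq_square)
  have "rot_angle \<alpha> v w = Re (-2*\<i> * (Ln (1 - hw) - Ln (1 - hv)))"
    by (simp add: rot_angle_def hw_def hv_def)
  also have "-2*\<i> * (Ln (1 - hw) - Ln (1 - hv))
      = -2*\<i> * (ln_remainder hw - ln_remainder hv) + -2*\<i> * (- (hw - hv) - (hw^2 - hv^2)/2)"
    unfolding Ln_split by (rule distrib_left)
  also have "\<dots> = ((cnj w - cnj v) * (- z - \<i> * (2 + cnj v + cnj w) / 4 * z^2)
         + -2*\<i> * ((\<alpha> - \<i>*z/2 + z^2/4) * (cnj v - cnj w)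
                   + (\<alpha>^2 + z^2/4) * (cnj v ^ 2 - cnj w ^ 2) / 2))
        + -2*\<i> * (ln_remainder hw - ln_remainder hv)"
    unfolding taylor_part by (rule add.commute)
  finally show ?thesis by (simp only: plus_complex.sel hw_def hv_def add_ac)
qed

lemma ln_remainder_diff_bound:
  assumes \<alpha>: "cmod \<alpha> \<le> 1/5" and v: "cmod v = 1" and w: "cmod w = 1"
  shows "cmod (ln_remainder (\<alpha> * cnj w) - ln_remainder (\<alpha> * cnj v)) \<le> 5/4 * cmod \<alpha> ^ 3 * cmod (w - v)"
proof -
  have "\<alpha> * cnj w - \<alpha> * cnj v = \<alpha> * cnj (w - v)" by (simp add: algebra_simps)
  then have dist: "cmod (\<alpha> * cnj w - \<alpha> * cnj v) = cmod \<alpha> * cmod (w - v)"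
    by (simp only: norm_mult complex_mod_cnj)
  have "cmod (ln_remainder (\<alpha> * cnj w) - ln_remainder (\<alpha> * cnj v))
      \<le> cmod \<alpha> ^ 2 / (1 - cmod \<alpha>) * cmod (\<alpha> * cnj w - \<alpha> * cnj v)"
    using \<alpha> v w by (intro ln_remainder_lipschitz) (auto simp: norm_mult)
  also have "\<dots> = cmod \<alpha> ^ 3 * cmod (w - v) / (1 - cmod \<alpha>)"
    unfolding dist by (simp add: power2_eq_square power3_eq_cube)
  also have "\<dots> \<le> 5/4 * cmod \<alpha> ^ 3 * cmod (w - v)"
    using \<alpha> mult_left_mono[of 1 "5/4 * (1 - cmod \<alpha>)" "cmod \<alpha> ^ 3 * cmod (w - v)"]
    by (simp add: pos_divide_le_eq algebra_simps)
  finally show ?thesis .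
qed

text \<open>The error made by replacing \<open>\<alpha>\<close> and \<open>\<alpha>\<^sup>2\<close> by their expansions (with errors \<open>e\<close>, \<open>e\<acute>\<close>)
  in the Taylor part is proportional to \<open>|w - v|\<close>.\<close>
lemma correction_term_bound:
  assumes v: "cmod v = 1" and w: "cmod w = 1"
  shows "cmod (e * (cnj v - cnj w) + e' * (cnj v ^ 2 - cnj w ^ 2) / 2) \<le> (cmod e + cmod e') * cmod (w - v)"
proof -
  have D: "cmod (cnj v - cnj w) = cmod (w - v)"
    by (metis complex_cnj_diff complex_mod_cnj norm_minus_commute)
  have "cmod (cnj v + cnj w) \<le> 2" using norm_triangle_ineq[of "cnj v" "cnj w"] v w by simp
  moreover have "cnj v ^ 2 - cnj w ^ 2 = (cnj v - cnj w) * (cnj v + cnj w)"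
    by (simp add: algebra_simps power2_eq_square)
  then have "cmod (cnj v ^ 2 - cnj w ^ 2) = cmod (w - v) * cmod (cnj v + cnj w)"
    by (simp only: norm_mult D)
  ultimately have "cmod (cnj v ^ 2 - cnj w ^ 2) / 2 \<le> cmod (w - v)"
    using mult_left_mono[of "cmod (cnj v + cnj w)" 2 "cmod (w - v)"] by simp
  then have second: "cmod (e' * (cnj v ^ 2 - cnj w ^ 2) / 2) \<le> cmod e' * cmod (w - v)"
    unfolding norm_divide norm_mult by (simp add: mult_left_mono times_divide_eq_right[symmetric]
        del: times_divide_eq_right)
  have "cmod (e * (cnj v - cnj w) + e' * (cnj v ^ 2 - cnj w ^ 2) / 2)
      \<le> cmod (e * (cnj v - cnj w)) + cmod (e' * (cnj v ^ 2 - cnj w ^ 2) / 2)"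
    by (rule norm_triangle_ineq)
  also have "cmod (e * (cnj v - cnj w)) = cmod e * cmod (w - v)" by (simp only: norm_mult D)
  finally show ?thesis using second unfolding distrib_right by linarith
qed

lemma rot_angle_cubic:
  assumes z: "cmod z \<le> 1/3" and v: "cmod v = 1" and w: "cmod w = 1"
  defines "\<alpha> \<equiv> - z / (2*\<i> + z)"
  shows "\<bar>rot_angle \<alpha> v w - Re ((cnj w - cnj v) * (- z - \<i> * (2 + cnj v + cnj w) / 4 * z^2))\<bar>
           \<le> 2 * cmod (w - v) * cmod z ^ 3"
proof -
  define D where "D = cmod (w - v)"
  define Z where "Z = cmod z"
  have D0: "0 \<le> D" and Z0: "0 \<le> Z" by (auto simp: D_def Z_def)
  have \<alpha>_bound: "cmod \<alpha> \<le> 3/5 * Z" using alpha_small(2)[OF z] by (simp add: \<alpha>_def Z_def)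
  then have \<alpha>: "cmod \<alpha> \<le> 1/5" using z by (simp add: Z_def)
  have "cmod \<alpha> ^ 3 \<le> (3/5 * Z) ^ 3" using \<alpha>_bound by (intro power_mono) auto
  then have \<alpha>_cube: "5/4 * cmod \<alpha> ^ 3 * D \<le> 5/4 * (3/5 * Z) ^ 3 * D" using D0 by (intro mult_right_mono) auto
  define R where "R = ln_remainder (\<alpha> * cnj w) - ln_remainder (\<alpha> * cnj v)"
  define E where "E = (\<alpha> - \<i>*z/2 + z^2/4) * (cnj v - cnj w) + (\<alpha>^2 + z^2/4) * (cnj v ^ 2 - cnj w ^ 2) / 2"
  have R_bound: "cmod R \<le> 27/100 * Z^3 * D"
    using \<alpha>_cube ln_remainder_diff_bound[OF \<alpha> v w]
    by (simp add: R_def D_def power3_eq_cube)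
  have "cmod (\<alpha> - \<i>*z/2 + z^2/4) + cmod (\<alpha>^2 + z^2/4) \<le> 54/100 * Z^3"
    using alpha_expansion[OF z] by (simp add: \<alpha>_def Z_def)
  then have E_bound: "cmod E \<le> 54/100 * Z^3 * D"
    using correction_term_bound[OF v w] mult_right_mono[OF _ D0] unfolding E_def D_def
    by (meson order.trans)
  have Re_bound: "\<bar>Re (-2*\<i> * x)\<bar> \<le> 2 * cmod x" for x :: complex
    using abs_Re_le_cmod[of "-2*\<i> * x"] by (simp add: norm_mult)
  have "\<bar>rot_angle \<alpha> v w - Re ((cnj w - cnj v) * (- z - \<i> * (2 + cnj v + cnj w) / 4 * z^2))\<bar>
      \<le> 2 * (27/100 * Z^3 * D) + 2 * (54/100 * Z^3 * D)"
    using rot_angle_decomposition[of \<alpha> v w z] Re_bound[of R] Re_bound[of E] R_bound E_bound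
    unfolding R_def E_def by linarith
  also have "\<dots> \<le> 2 * D * Z^3" using D0 Z0 by simp
  finally show ?thesis unfolding D_def Z_def .
qed

text \<open>For \<open>|z| \<le> 1/3\<close> no wrap-around occurs, so \<open>ash\<close> equals the rotation angle.\<close>
lemma ash_cubic_estimate:
  assumes det: "a*d - b*c > 0" and im: "Im (\<i> + z) > 0" and T: "mobT a b c d (\<i> + z) = \<i>"
    and v: "cmod v = 1" and w: "cmod w = 1" and z: "cmod z \<le> 1/3"
  shows "\<bar>ash a b c d v w - Re ((cnj w - cnj v) * (- z - \<i> * (2 + cnj v + cnj w) / 4 * z^2))\<bar>
           \<le> 2 * cmod (w - v) * cmod z ^ 3"
proof -
  define \<alpha> where "\<alpha> = - z / (2*\<i> + z)"
  have \<alpha>1: "cmod \<alpha> < 1" using hatT_blaschke(1)[OF det im T] by (simp add: \<alpha>_def)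
  have "cmod \<alpha> \<le> 1/5" using alpha_small(2)[OF z] z by (simp add: \<alpha>_def)
  then have "\<bar>rot_angle \<alpha> v w\<bar> \<le> cmod (w - v) / 2" using rot_angle_bound[OF _ v w] by simp
  moreover have "w / v - 1 = (w - v) / v" using v by (auto simp: diff_divide_distrib)
  then have "cmod (w / v - 1) = cmod (w - v)" using v by (simp add: norm_divide)
  ultimately have "\<bar>rot_angle \<alpha> v w\<bar> \<le> cmod (w / v - 1) / 2" by simp
  moreover have "cmod (w / v) = 1" using v w by (simp add: norm_divide)
  ultimately have "Arg02 (w / v * exp (\<i> * of_real (rot_angle \<alpha> v w))) = Arg02 (w / v) + rot_angle \<alpha> v w"
    by (rule Arg02_rotate[rotated])
  then have "ash a b c d v w = rot_angle \<alpha> v w"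
    using ash_blaschke[OF det im T] blaschke_ratio_rotation[OF \<alpha>1 v w] by (simp add: \<alpha>_def)
  then show ?thesis using rot_angle_cubic[OF z v w] by (simp add: \<alpha>_def)
qed


section \<open>The linear estimate for \<open>v = -1\<close>\<close>

lemma unit_circle_cayley:
  assumes w: "cmod w = 1" and wn: "w \<noteq> -1"
  obtains s :: real where "w = (\<i> - of_real s) / (\<i> + of_real s)"
proof -
  have w0: "w \<noteq> 0" using w by auto
  have w1: "1 + w \<noteq> 0" using wn by (metis add.commute add_eq_0_iff)
  define t where "t = \<i> * (1 - w) / (1 + w)"
  have cw: "cnj w = 1 / w" using unit_mult_cnj[OF w] w0 by (simp add: eq_divide_eq mult.commute)
  have "cnj t = - \<i> * (1 - 1 / w) / (1 + 1 / w)" unfolding t_def cw[symmetric] by simp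
  also have "\<dots> = - \<i> * ((w - 1) / w) / ((1 + w) / w)" using w0 by (simp add: diff_divide_distrib add_divide_distrib)
  also have "\<dots> = t" using w0 w1 unfolding t_def by (simp add: divide_simps) (simp add: algebra_simps)
  finally have "cnj t = t" .
  define s where "s = Re t"
  have t: "t = of_real s" using \<open>cnj t = t\<close> by (simp add: complex_eq_iff s_def)
  have "(\<i> + t) * w = \<i> - t" using w1 unfolding t_def by (simp add: field_simps)
  moreover have "\<i> + of_real s \<noteq> 0" by (simp add: complex_eq_iff)
  ultimately have "w = (\<i> - of_real s) / (\<i> + of_real s)"
    unfolding t by (simp add: eq_divide_eq mult.commute)
  then show ?thesis by (rule that)
qed

lemma blaschke_ratio_half_plane:
  fixes p :: complex and s :: real
  assumes "Im p > 0"
  defines "S \<equiv> complex_of_real s" and "\<alpha> \<equiv> (\<i> - p) / (\<i> + p)"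
  shows "blaschke \<alpha> ((\<i> - S) / (\<i> + S)) / blaschke \<alpha> (-1) = (S - p) / (S - cnj p)"
proof -
  have n1: "\<i> + p \<noteq> 0" and n2: "\<i> - cnj p \<noteq> 0" and n3: "\<i> + S \<noteq> 0"
    and n4: "S - cnj p \<noteq> 0"
    using assms(1) by (auto simp: complex_eq_iff S_def)
  have "cnj \<alpha> = (- (\<i> + cnj p)) / (- (\<i> - cnj p))" by (simp add: \<alpha>_def)
  then have cnj_\<alpha>: "cnj \<alpha> = (\<i> + cnj p) / (\<i> - cnj p)" by (simp only: minus_divide_divide)
  have num_u: "(\<i> - S)/(\<i> + S) - \<alpha> = 2*\<i>*(p - S)/((\<i> + S)*(\<i> + p))"
    using n1 n3 unfolding \<alpha>_def by (simp add: field_simps)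
  have "1 - cnj \<alpha> * ((\<i> - S)/(\<i> + S))
      = ((\<i> - cnj p)*(\<i> + S) - (\<i> + cnj p)*(\<i> - S)) / ((\<i> - cnj p)*(\<i> + S))"
    using n2 n3 unfolding cnj_\<alpha> by (subst times_divide_times_eq, subst diff_divide_eq_iff) auto
  also have "(\<i> - cnj p)*(\<i> + S) - (\<i> + cnj p)*(\<i> - S) = 2*\<i>*(S - cnj p)"
    by (simp add: algebra_simps)
  finally have den_u: "1 - cnj \<alpha> * ((\<i> - S)/(\<i> + S)) = 2*\<i>*(S - cnj p)/((\<i> - cnj p)*(\<i> + S))" .
  have at_S: "blaschke \<alpha> ((\<i> - S) / (\<i> + S)) = (p - S) * (\<i> - cnj p) / ((S - cnj p) * (\<i> + p))"
    unfolding blaschke_def num_u den_u divide_divide_times_eq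
    by (rule iffD2[OF frac_eq_eq]) (use n1 n2 n3 n4 in \<open>simp, simp, simp add: algebra_simps\<close>)
  have at_infinity: "blaschke \<alpha> (-1) = - (\<i> - cnj p) / (\<i> + p)"
  proof -
    have num: "-1 - \<alpha> = -2*\<i> / (\<i> + p)" using n1 unfolding \<alpha>_def by (simp add: field_simps)
    have den: "1 - cnj \<alpha> * (-1) = 2*\<i> / (\<i> - cnj p)" using n2 unfolding cnj_\<alpha> by (simp add: field_simps)
    show ?thesis unfolding blaschke_def num den divide_divide_times_eq
      by (rule iffD2[OF frac_eq_eq]) (use n1 n2 in \<open>simp, simp, simp add: algebra_simps\<close>)
  qed
  show ?thesis unfolding at_S at_infinity divide_divide_times_eq
    by (rule iffD2[OF frac_eq_eq]) (use n1 n2 n4 in \<open>simp, simp, simp add: algebra_simps\<close>)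
qed

text \<open>For \<open>v = -1\<close> the quantity \<open>ash\<close> is twice a difference of arguments of the points
  \<open>\<i>(s - \<i> - z)\<close> and \<open>\<i>(s - \<i>)\<close> of the right half plane, whence a bound linear in \<open>|z|\<close>.\<close>
lemma blaschke_ash_minus_one:
  assumes im: "Im (\<i> + z) > 0" and w: "cmod w = 1"
  defines "\<alpha> \<equiv> - z / (2*\<i> + z)"
  shows "\<bar>Arg02 (blaschke \<alpha> w / blaschke \<alpha> (-1)) - Arg02 (w / -1)\<bar> \<le> 2 * pi * cmod (w + 1) * cmod z"
proof (cases "w = -1")
  case True
  have "blaschke \<alpha> w / blaschke \<alpha> (-1) \<in> {0, 1}" using True by (cases "blaschke \<alpha> (-1) = 0") auto
  then show ?thesis using True by (auto simp: Arg02_def Arg_zero)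
next
  case False
  obtain s :: real where ws: "w = (\<i> - of_real s) / (\<i> + of_real s)"
    using unit_circle_cayley[OF w False] by blast
  define S where "S = complex_of_real s"
  define g' where "g' = \<i> * (S - (\<i> + z))"
  define g where "g = \<i> * (S - \<i>)"
  have cS: "cnj S = S" and iS: "\<i> + S \<noteq> 0" by (auto simp: S_def complex_eq_iff)
  have g': "Re g' > 0" and g: "Re g > 0" using im by (simp_all add: g'_def g_def S_def)
  have "\<alpha> = (\<i> - (\<i> + z)) / (\<i> + (\<i> + z))" by (simp add: \<alpha>_def)
  then have "blaschke \<alpha> w / blaschke \<alpha> (-1) = (S - (\<i> + z)) / (S - cnj (\<i> + z))"
    using blaschke_ratio_half_plane[OF im, of s] ws by (simp add: S_def)
  also have "\<dots> = - g' / cnj g'"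
  proof -
    have "cnj g' = - \<i> * (S - cnj (\<i> + z))" using cS by (simp add: g'_def)
    then show ?thesis by (simp add: g'_def)
  qed
  finally have ratio: "blaschke \<alpha> w / blaschke \<alpha> (-1) = - g' / cnj g'" .
  have "cnj g = - \<i> * (S + \<i>)" using cS by (simp add: g_def)
  then have "- g / cnj g = (S - \<i>) / (S + \<i>)" by (simp add: g_def)
  also have "\<dots> = - ((\<i> - S) / (\<i> + S))" by (metis minus_diff_eq divide_minus_left add.commute)
  also have "\<dots> = w / -1" by (simp add: ws S_def)
  finally have ash_eq: "Arg02 (blaschke \<alpha> w / blaschke \<alpha> (-1)) - Arg02 (w / -1) = 2 * (Arg g' - Arg g)"
    using ratio Arg02_reflection[OF g'] Arg02_reflection[OF g] by simp
  have Arg_bound: "\<bar>Arg g' - Arg g\<bar> \<le> 2 * pi * cmod z / cmod g"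
  proof -
    have "g' - g = - \<i> * z" by (simp add: g'_def g_def algebra_simps)
    then have "cmod (g' - g) = cmod z" by (simp add: norm_mult)
    then show ?thesis by (rule Arg_diff_right_half_plane[OF g' g])
  qed
  have w1: "cmod (w + 1) = 2 / cmod g"
  proof -
    have "w + 1 = 2 * \<i> / (\<i> + S)" unfolding ws S_def[symmetric] using iS by (simp add: field_simps)
    moreover have "g = \<i> * cnj (\<i> + S)" using cS by (simp add: g_def)
    then have "cmod g = cmod (\<i> + S)" by (simp only: norm_mult complex_mod_cnj) simp
    ultimately show ?thesis by (simp add: norm_divide norm_mult)
  qed
  have "\<bar>Arg02 (blaschke \<alpha> w / blaschke \<alpha> (-1)) - Arg02 (w / -1)\<bar> \<le> 2 * (2 * pi * cmod z / cmod g)"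
    unfolding ash_eq abs_mult using Arg_bound by simp
  also have "\<dots> = 2 * pi * cmod (w + 1) * cmod z" unfolding w1 by simp
  finally show ?thesis .
qed

text \<open>The linear estimate for \<open>ash\<close> itself, with \<open>8 > 2\<pi>\<close>.\<close>
lemma ash_linear_estimate_minus_one:
  assumes det: "a*d - b*c > 0" and im: "Im (\<i> + z) > 0" and T: "mobT a b c d (\<i> + z) = \<i>"
    and w: "cmod w = 1"
  shows "\<bar>ash a b c d (-1) w\<bar> \<le> 8 * cmod (w - (-1)) * cmod z"
proof -
  have "\<bar>ash a b c d (-1) w\<bar> \<le> 2 * pi * cmod (w + 1) * cmod z"
    using ash_blaschke[OF det im T] blaschke_ash_minus_one[OF im w] by simp
  also have "\<dots> \<le> 8 * cmod (w + 1) * cmod z"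
    using pi_less_4 by (intro mult_right_mono) auto
  finally show ?thesis by simp
qed


text \<open>The quadratic term of the expansion is bounded by \<open>|w - v| |z|\<^sup>2\<close>, since \<open>|2 + cnj v + cnj w| \<le> 4\<close>.\<close>
lemma quadratic_term_bound:
  assumes v: "cmod v = 1" and w: "cmod w = 1"
  shows "\<bar>Re ((cnj w - cnj v) * (- z - \<i> * (2 + cnj v + cnj w) / 4 * z^2)) + Re ((cnj w - cnj v) * z)\<bar>
           \<le> cmod (w - v) * cmod z ^ 2"
proof -
  have D: "cmod (cnj w - cnj v) = cmod (w - v)" by (metis complex_cnj_diff complex_mod_cnj)
  have "cmod (2 + cnj v + cnj w) \<le> cmod (2 + cnj v) + cmod (cnj w)" by (rule norm_triangle_ineq)
  also have "cmod (2 + cnj v) \<le> cmod (2::complex) + cmod (cnj v)" by (rule norm_triangle_ineq)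
  finally have four: "cmod (2 + cnj v + cnj w) / 4 \<le> 1" using v w by simp
  have "Re ((cnj w - cnj v) * (- z - \<i> * (2 + cnj v + cnj w) / 4 * z^2)) + Re ((cnj w - cnj v) * z)
      = Re ((cnj w - cnj v) * (- (\<i> * (2 + cnj v + cnj w) / 4) * z^2))"
    by (simp add: algebra_simps)
  also have "\<bar>\<dots>\<bar> \<le> cmod ((cnj w - cnj v) * (- (\<i> * (2 + cnj v + cnj w) / 4) * z^2))"
    by (rule abs_Re_le_cmod)
  also have "\<dots> = cmod (w - v) * (cmod (2 + cnj v + cnj w) / 4) * cmod z ^ 2"
    using D by (simp add: norm_mult norm_divide norm_power)
  also have "\<dots> \<le> cmod (w - v) * 1 * cmod z ^ 2"
    using four by (intro mult_right_mono mult_left_mono) auto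
  finally show ?thesis by simp
qed

text \<open>The arithmetic that turns the cubic estimate (available for \<open>|z| \<le> 1/3\<close>) or the linear
  one (available for \<open>|z| > 1/3\<close>) into all three error bounds with the constant \<open>100\<close>.\<close>
lemma error_bounds_from_estimates:
  fixes A X Y D Z :: real
  assumes D: "0 \<le> D" and Z: "0 \<le> Z" and lin: "\<bar>Y\<bar> \<le> D * Z" and quad: "\<bar>X + Y\<bar> \<le> D * Z^2"
    and cubic: "Z \<le> 1/3 \<Longrightarrow> \<bar>A - X\<bar> \<le> 2 * D * Z^3"
    and linear: "1/3 < Z \<Longrightarrow> \<bar>A\<bar> \<le> 8 * D * Z"
  shows "\<bar>A - X\<bar> \<le> 100 * D * Z^3 \<and> \<bar>A + Y\<bar> \<le> 100 * D * Z^2 \<and> \<bar>A\<bar> \<le> 100 * D * Z"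
proof (cases "Z \<le> 1/3")
  case True
  have "D * Z^2 * (3 * Z) \<le> D * Z^2 * 1" and "D * Z * (3 * Z) \<le> D * Z * 1"
    using True D Z by (intro mult_left_mono; simp)+
  then have "3 * (D * Z^3) \<le> D * Z^2" and "3 * (D * Z^2) \<le> D * Z"
    by (simp_all add: power2_eq_square power3_eq_cube algebra_simps)
  moreover have "0 \<le> D * Z^3" using D Z by simp
  ultimately show ?thesis using cubic[OF True] lin quad by (simp add: algebra_simps abs_le_iff)
next
  case False
  have "D * Z^2 * 1 \<le> D * Z^2 * (3 * Z)" and "D * Z * 1 \<le> D * Z * (3 * Z)"
    using False D Z by (intro mult_left_mono; simp)+
  then have "D * Z^2 \<le> 3 * (D * Z^3)" and "D * Z \<le> 3 * (D * Z^2)"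
    by (simp_all add: power2_eq_square power3_eq_cube algebra_simps)
  moreover have "0 \<le> D * Z" using D Z by simp
  ultimately show ?thesis using linear False lin quad by (simp add: algebra_simps abs_le_iff)
qed

theorem mainTheorem11:
  shows "\<exists>C::real. \<forall>(a::real) b c d (z::complex) v w.
     a * d - b * c > 0 \<longrightarrow> Im (\<i> + z) > 0 \<longrightarrow> mobT a b c d (\<i> + z) = \<i> \<longrightarrow>
     cmod v = 1 \<longrightarrow> cmod w = 1 \<longrightarrow> (cmod z \<le> 1/3 \<or> v = -1) \<longrightarrow>
     (let e3 = ash a b c d v w - Re ((cnj w - cnj v) * (- z - \<i> * (2 + cnj v + cnj w) / 4 * z^2));
          e2 = ash a b c d v w + Re ((cnj w - cnj v) * z);
          e1 = ash a b c d v w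
      in \<bar>e3\<bar> \<le> C * cmod (w - v) * cmod z ^ 3 \<and> C * cmod (w - v) * cmod z ^ 3 \<le> 2 * C * cmod z ^ 3 \<and>
         \<bar>e2\<bar> \<le> C * cmod (w - v) * cmod z ^ 2 \<and> C * cmod (w - v) * cmod z ^ 2 \<le> 2 * C * cmod z ^ 2 \<and>
         \<bar>e1\<bar> \<le> C * cmod (w - v) * cmod z \<and> C * cmod (w - v) * cmod z \<le> 2 * C * cmod z)"
proof (rule exI[of _ 100], intro allI impI)
  fix a b c d :: real and z v w :: complex
  assume det: "a * d - b * c > 0" and im: "Im (\<i> + z) > 0" and T: "mobT a b c d (\<i> + z) = \<i>"
    and v: "cmod v = 1" and w: "cmod w = 1" and small_or_infinite: "cmod z \<le> 1/3 \<or> v = -1"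
  have linear: "\<bar>ash a b c d v w\<bar> \<le> 8 * cmod (w - v) * cmod z" if "1/3 < cmod z"
    using ash_linear_estimate_minus_one[OF det im T w] small_or_infinite that by auto
  have lin: "\<bar>Re ((cnj w - cnj v) * z)\<bar> \<le> cmod (w - v) * cmod z"
    using abs_Re_le_cmod[of "(cnj w - cnj v) * z"] by (simp add: norm_mult flip: complex_cnj_diff)
  have bounds: "\<bar>ash a b c d v w - Re ((cnj w - cnj v) * (- z - \<i> * (2 + cnj v + cnj w) / 4 * z^2))\<bar>
        \<le> 100 * cmod (w - v) * cmod z ^ 3
      \<and> \<bar>ash a b c d v w + Re ((cnj w - cnj v) * z)\<bar> \<le> 100 * cmod (w - v) * cmod z ^ 2
      \<and> \<bar>ash a b c d v w\<bar> \<le> 100 * cmod (w - v) * cmod z"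
    by (rule error_bounds_from_estimates[OF norm_ge_zero norm_ge_zero lin quadratic_term_bound[OF v w]
          ash_cubic_estimate[OF det im T v w] linear])
  have "cmod (w - v) \<le> 2" using norm_triangle_ineq4[of w v] v w by simp
  then have "100 * cmod (w - v) * cmod z ^ k \<le> 2 * 100 * cmod z ^ k" for k :: nat
    by (intro mult_right_mono) auto
  then show "let e3 = ash a b c d v w - Re ((cnj w - cnj v) * (- z - \<i> * (2 + cnj v + cnj w) / 4 * z^2));
          e2 = ash a b c d v w + Re ((cnj w - cnj v) * z);
          e1 = ash a b c d v w
      in \<bar>e3\<bar> \<le> 100 * cmod (w - v) * cmod z ^ 3 \<and> 100 * cmod (w - v) * cmod z ^ 3 \<le> 2 * 100 * cmod z ^ 3 \<and>
         \<bar>e2\<bar> \<le> 100 * cmod (w - v) * cmod z ^ 2 \<and> 100 * cmod (w - v) * cmod z ^ 2 \<le> 2 * 100 * cmod z ^ 2 \<and>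
         \<bar>e1\<bar> \<le> 100 * cmod (w - v) * cmod z \<and> 100 * cmod (w - v) * cmod z \<le> 2 * 100 * cmod z"
    using bounds power_one_right[of "cmod z"] unfolding Let_def by metis
qed

end
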